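(* Let $m\ge1$ and let $a_0,\dots,a_m,b_1,\dots,b_m\in\mathbb C$ satisfy $a_i-b_j\notin\mathbb Z$ ($0\le i,j\le m$) and $b_i-b_j\notin\mathbb Z$ ($0\le i<j\le m$), where $b_0:=0$; write $a_{m+1}:=a_0$. Then, for $x$ in a neighbourhood of $0$ (as an identity of power series), $$\prod_{l=1}^m\frac{b_l}{a_l}=\prod_{l=1}^m\frac{b_l}{a_l}\cdot{}_{m+1}F_m\!\left(\begin{matrix}\boldsymbol a\\ \boldsymbol b\end{matrix};x\right){}_{m+1}F_m\!\left(\begin{matrix}-\boldsymbol a\\ -\boldsymbol b\end{matrix};x\right)+\sum_{r=1}^m x^2\frac{a_0(a_0-b_r)(b_r-a_r)}{b_r(b_r^2-1)}\prod_{\substack{1\le l\le m\\ l\ne r}}\frac{a_l-b_r}{b_l-b_r}\cdot{}_{m+1}F_m\!\left(\begin{matrix}\boldsymbol a^{r,+}\\ \boldsymbol b^{r,+}\end{matrix};x\right){}_{m+1}F_m\!\left(\begin{matrix}\boldsymbol a^{r,-}\\ \boldsymbol b^{r,-}\end{matrix};x\right),$$ where $\boldsymbol a=(a_1,\dots,a_{m+1})$, $\boldsymbol b=(b_1,\dots,b_m)$, $\boldsymbol a^{r,\pm}=(1,\dots,1)\pm(a_1-b_r,\dots,a_{m+1}-b_r)$, and $\boldsymbol b^{r,\pm}=(1,\dots,1)\pm(b_1-b_r,\dots,\pm1-b_r,\dots,b_m-b_r)$, the entry $\pm1-b_r$ being in the $r$-th position (so the $r$-th entry of $\boldsymbol b^{r,+}$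 is $2-b_r$ and that of $\boldsymbol b^{r,-}$ is $2+b_r$).
   Context: ${}_{m+1}F_m\!\left(\begin{matrix}\alpha_1,\dots,\alpha_{m+1}\\ \beta_1,\dots,\beta_m\end{matrix};x\right)=\sum_{n=0}^\infty\frac{(\alpha_1,n)\cdots(\alpha_{m+1},n)}{(\beta_1,n)\cdots(\beta_m,n)\,n!}x^n$ with $(c,n)=\Gamma(c+n)/\Gamma(c)$, convergent for $|x|<1$; $-\boldsymbol a$, $-\boldsymbol b$ denote the componentwise negated parameter vectors. *)

theory Defs
  imports Complex_Main "HOL-Computational_Algebra.Formal_Power_Series"
begin

definition hyp_fps :: "complex list \<Rightarrow> complex list \<Rightarrow> complex fps" where
  "hyp_fps as bs = Abs_fps (\<lambda>n.
     prod_list (map (\<lambda>\<alpha>. pochhammer \<alpha> n) as) /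
     (prod_list (map (\<lambda>\<beta>. pochhammer \<beta> n) bs) * fact n))"

end

theory Submission
  imports Defs "HOL-Computational_Algebra.Polynomial"
begin

(* Both sides are power series, so it suffices to compare the coefficients
   of x^n.  For n >= 1 the coefficient of the right-hand
   side is a finite sum of products of Pochhammer symbols, and every summand turns out to be
   a0 * N(z) / D(z), where z runs over the node set
       Z = {0, ..., n}  union  U_r {k + 1 - b_r | k < n - 1},
   N is the fixed polynomial prod_{i=0..m} prod_{t=1-n..-1} (X + a_i + t) and
   D(z) = prod_{w in Z - {z}} (z - w).  Since deg N = (m+1)(n-1) <= |Z| - 2, the
   Lagrange-interpolation identity sum_z N(z)/D(z) = 0 shows that the coefficient vanishes. *)

(* Lagrange interpolation: the leading coefficient of the interpolant of p on the nodes Z is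
   the sum below, and it vanishes when p has degree at most card Z - 2. *)
lemma lagrange_sum_vanishes:
  fixes Z :: "'a::field set" and p :: "'a poly"
  assumes fin: "finite Z" and deg: "degree p + 2 \<le> card Z"
  shows "(\<Sum>z\<in>Z. poly p z / (\<Prod>w\<in>Z-{z}. z - w)) = 0"
proof -
  define L where "L z = (\<Prod>w\<in>Z-{z}. [:-w, 1:])" for z
  define c where "c z = poly p z / (\<Prod>w\<in>Z-{z}. z - w)" for z
  define q where "q = (\<Sum>z\<in>Z. smult (c z) (L z))"
  have degree_L: "degree (L z) = card Z - 1" if "z \<in> Z" for z
  proof -
    have "degree (L z) = (\<Sum>w\<in>Z-{z}. degree [:-w, 1:])"
      unfolding L_def by (rule degree_prod_sum_eq) auto
    then show ?thesis using that fin by simp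
  qed
  have lead_coeff_L: "lead_coeff (L z) = 1" for z
    unfolding L_def lead_coeff_prod by simp
  have poly_L: "poly (L z) y = (\<Prod>w\<in>Z-{z}. y - w)" for z y
    unfolding L_def poly_prod by simp
  have "(\<Prod>w\<in>Z-{z}. z - w) \<noteq> 0" for z
    using fin by (subst prod_zero_iff) auto
  then have interpolates: "poly q y = poly p y" if "y \<in> Z" for y
  proof -
    have "poly q y = (\<Sum>z\<in>Z. c z * poly (L z) y)"
      unfolding q_def poly_sum by simp
    also have "\<dots> = (\<Sum>z\<in>{y}. c z * poly (L z) y)"
      by (rule sum.mono_neutral_right) (use fin that in \<open>auto simp: poly_L\<close>)
    also have "\<dots> = poly p y" using \<open>(\<Prod>w\<in>Z-{y}. y - w) \<noteq> 0\<close> by (simp add: c_def poly_L)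
    finally show ?thesis .
  qed
  have "degree q \<le> card Z - 1"
    unfolding q_def
    by (rule degree_sum_le[OF fin]) (metis degree_L degree_smult_le order.trans order.refl)
  then have "p = q"
    by (intro poly_eqI_degree[of Z]) (use interpolates deg in auto)
  then have "coeff q (card Z - 1) = 0" using deg by (simp add: coeff_eq_0)
  moreover have "coeff q (card Z - 1) = (\<Sum>z\<in>Z. c z)"
    unfolding q_def coeff_sum coeff_smult
    by (intro sum.cong refl) (metis degree_L lead_coeff_L mult.right_neutral)
  ultimately show ?thesis unfolding c_def by simp
qed

lemma divide_minus_one_power: "c / (-1::'a::field) ^ j = (-1) ^ j * c"
  by (cases "even j") simp_all

lemma pochhammer_nonzero: "(x::'a::field_char_0) \<notin> \<int> \<Longrightarrow> pochhammer x k \<noteq> 0"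
  by (auto simp: pochhammer_eq_0_iff)

definition range_prod :: "'a::comm_ring_1 \<Rightarrow> int \<Rightarrow> int \<Rightarrow> 'a" where
  "range_prod u lo hi = (\<Prod>t\<in>{lo..hi}. u + of_int t)"

lemma range_prod_single: "range_prod u c c = u + of_int c"
  by (simp add: range_prod_def)

lemma range_prod_split:
  assumes "lo \<le> mid + 1" "mid \<le> hi"
  shows "range_prod u lo hi = range_prod u lo mid * range_prod u (mid + 1) hi"
proof -
  have "{lo..hi} = {lo..mid} \<union> {mid + 1..hi}" using assms by auto
  then show ?thesis unfolding range_prod_def
    by (subst prod.union_disjoint[symmetric]) auto
qed

lemma range_prod_split_at_zero:
  "lo \<le> 0 \<Longrightarrow> 0 \<le> hi \<Longrightarrow> range_prod u lo hi = range_prod u lo (-1) * u * range_prod u 1 hi"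
  using range_prod_split[of lo "-1" hi u] range_prod_split[of 0 0 hi u]
  by (simp add: range_prod_single)

lemma range_prod_shift: "range_prod (u + of_int c) lo hi = range_prod u (lo + c) (hi + c)"
proof -
  have "range_prod u (lo + c) (hi + c) = (\<Prod>t\<in>(\<lambda>t. t + c) ` {lo..hi}. u + of_int t)"
    unfolding range_prod_def by (simp add: image_add_atLeastAtMost')
  also have "\<dots> = (\<Prod>t\<in>{lo..hi}. u + of_int (t + c))"
    by (subst prod.reindex) (auto simp: inj_on_def)
  finally show ?thesis unfolding range_prod_def by (simp add: algebra_simps)
qed

lemma range_prod_reflect: "range_prod u lo hi = (-1) ^ nat (hi - lo + 1) * range_prod (-u) (-hi) (-lo)"
proof -
  have "range_prod (-u) (-hi) (-lo) = (\<Prod>t\<in>uminus ` {lo..hi}. - u + of_int t)"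
    unfolding range_prod_def by simp
  also have "\<dots> = (\<Prod>t\<in>{lo..hi}. - (u + of_int t))"
    by (subst prod.reindex) (auto simp: inj_on_def intro!: prod.cong)
  also have "\<dots> = (-1) ^ card {lo..hi} * range_prod u lo hi"
    unfolding range_prod_def by (subst prod_uminus) simp
  finally show ?thesis by simp
qed

lemma prod_diff_range_prod: "(\<Prod>t\<in>{lo..hi}. x - of_int t) = range_prod x (-hi) (-lo)"
proof -
  have "range_prod x (-hi) (-lo) = (\<Prod>t\<in>uminus ` {lo..hi}. x + of_int t)"
    unfolding range_prod_def by simp
  also have "\<dots> = (\<Prod>t\<in>{lo..hi}. x - of_int t)"
    by (subst prod.reindex) (auto simp: inj_on_def)
  finally show ?thesis by simp
qed

lemma range_prod_nonzero:
  fixes u :: "'a::idom"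
  assumes "u \<notin> \<int>"
  shows "range_prod u lo hi \<noteq> 0"
proof -
  have "u + of_int t \<noteq> 0" for t
  proof
    assume "u + of_int t = 0"
    then have "u = of_int (-t)" by (simp add: add_eq_0_iff)
    with assms show False by auto
  qed
  then show ?thesis unfolding range_prod_def by simp
qed

lemma pochhammer_range_prod: "pochhammer u k = range_prod u 0 (int k - 1)"
proof -
  have "pochhammer u k = (\<Prod>t\<in>{0..<k}. u + of_nat t)" by (rule pochhammer_prod)
  also have "\<dots> = (\<Prod>t\<in>int ` {0..<k}. u + of_int t)"
    by (subst prod.reindex) auto
  also have "int ` {0..<k} = {0..int k - 1}" by (auto simp: image_int_atLeastLessThan)
  finally show ?thesis unfolding range_prod_def .
qed

lemma pochhammer_one_minus: "pochhammer (1 - u) j = (-1) ^ j * range_prod u (- int j) (-1)"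
proof -
  have "pochhammer (1 - u) j = (-1) ^ j * range_prod (u - 1) (1 - int j) 0"
    by (simp add: pochhammer_range_prod range_prod_reflect[of "1 - u"])
  also have "range_prod (u - 1) (1 - int j) 0 = range_prod (u + of_int (-1)) (1 - int j) 0"
    by simp
  also have "\<dots> = range_prod u (- int j) (-1)" by (subst range_prod_shift) simp
  finally show ?thesis .
qed

lemma fact_range_prod: "fact k = range_prod (0::'a::{comm_ring_1, semiring_char_0}) 1 (int k)"
  using range_prod_shift[of 0 1 0 "int k - 1"]
  by (simp add: pochhammer_fact pochhammer_range_prod)

lemma range_prod_overlap:
  assumes "lo \<le> 1" "-1 \<le> hi" "lo \<le> hi + 1"
  shows "range_prod u lo 0 * range_prod u 0 hi = u * range_prod u lo hi"
proof (cases "lo = 1")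
  case True
  then show ?thesis using assms range_prod_split[of 0 0 hi u]
    by (simp add: range_prod_def range_prod_single)
next
  case False
  then have "lo \<le> 0" using assms by simp
  then show ?thesis
    using range_prod_split[of lo "-1" 0 u] range_prod_split[of lo "-1" hi u] assms
    by (simp add: range_prod_single)
qed

lemma pochhammer_times_pochhammer_neg:
  fixes x :: "'a::comm_ring_1"
  assumes "k \<le> n" "1 \<le> n"
  shows "pochhammer x k * pochhammer (-x) (n - k)
           = (-1) ^ (n - k) * x * range_prod (x + of_nat k) (1 - int n) (-1)"
proof -
  have "pochhammer (-x) (n - k) = (-1) ^ (n - k) * range_prod (x + of_int 1) (- int (n - k)) (-1)"
    using pochhammer_one_minus[of "x + 1" "n - k"] by simp
  also have "range_prod (x + of_int 1) (- int (n - k)) (-1) = range_prod x (int k + 1 - int n) 0"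
    using assms by (subst range_prod_shift) (simp add: of_nat_diff algebra_simps)
  finally have neg: "pochhammer (-x) (n - k) = (-1) ^ (n - k) * range_prod x (int k + 1 - int n) 0" .
  have glue: "range_prod x (int k + 1 - int n) 0 * range_prod x 0 (int k - 1)
                = x * range_prod x (int k + 1 - int n) (int k - 1)"
    by (rule range_prod_overlap) (use assms in auto)
  have "range_prod (x + of_int (int k)) (1 - int n) (-1) = range_prod x (int k + 1 - int n) (int k - 1)"
    by (subst range_prod_shift) (simp add: algebra_simps)
  then show ?thesis using neg glue by (simp add: pochhammer_range_prod algebra_simps)
qed

lemma pochhammer_one_plus_one_minus:
  fixes u :: "'a::comm_ring_1"
  shows "pochhammer (1 + u) k * pochhammer (1 - u) j * u * (-1) ^ j
           = range_prod (u + of_nat k + 1) (- (int k + int j + 1)) (-1)"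
proof -
  have plus: "pochhammer (1 + u) k = range_prod u 1 (int k)"
    using range_prod_shift[of u 1 0 "int k - 1"] by (simp add: pochhammer_range_prod add.commute)
  have "range_prod (u + of_int (int k + 1)) (- (int k + int j + 1)) (-1) = range_prod u (- int j) (int k)"
    by (subst range_prod_shift) (simp add: algebra_simps)
  also have "\<dots> = range_prod u (- int j) (-1) * u * range_prod u 1 (int k)"
    by (rule range_prod_split_at_zero) auto
  finally have whole: "range_prod (u + of_nat k + 1) (- (int k + int j + 1)) (-1)
                         = range_prod u (- int j) (-1) * u * range_prod u 1 (int k)"
    by (simp add: add.assoc)
  have "((-1::'a) ^ j) * (-1) ^ j = 1" by (simp flip: power_add power_mult_distrib)
  then show ?thesis unfolding whole plus pochhammer_one_minus
    by (simp add: algebra_simps)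
qed

lemma pochhammer_two_minus_two_plus:
  fixes b :: "'a::comm_ring_1"
  shows "pochhammer (2 - b) k * pochhammer (2 + b) j * (-1) ^ j * ((-b - 1) * (-b) * (-b + 1))
           = range_prod (-b + of_nat k + 1) (- (int k + int j + 2)) 0"
proof -
  define w where "w = -b"
  have plus: "pochhammer (2 - b) k = range_prod w 2 (int k + 1)"
    using range_prod_shift[of w 2 0 "int k - 1"] by (simp add: pochhammer_range_prod w_def add.commute)
  have "pochhammer (2 + b) j = (-1) ^ j * range_prod (w + of_int (-1)) (- int j) (-1)"
    using pochhammer_one_minus[of "w - 1" j] by (simp add: w_def)
  also have "range_prod (w + of_int (-1)) (- int j) (-1) = range_prod w (- int j - 1) (-2)"
    by (subst range_prod_shift) simp
  finally have minus: "pochhammer (2 + b) j = (-1) ^ j * range_prod w (- int j - 1) (-2)" .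
  have "- (int k + int j + 2) + (int k + 1) = - int j - 1" by simp
  then have "range_prod (w + of_int (int k + 1)) (- (int k + int j + 2)) 0
               = range_prod w (- int j - 1) (int k + 1)"
    by (subst range_prod_shift) simp
  also have "\<dots> = range_prod w (- int j - 1) (-2) * range_prod w (-1) (int k + 1)"
    using range_prod_split[of "- int j - 1" "-2" "int k + 1" w] by simp
  also have "range_prod w (-1) (int k + 1) = (w - 1) * w * ((w + 1) * range_prod w 2 (int k + 1))"
    using range_prod_split_at_zero[of "-1" "int k + 1" w] range_prod_split[of 1 1 "int k + 1" w]
    by (simp add: range_prod_single)
  finally have whole: "range_prod (-b + of_nat k + 1) (- (int k + int j + 2)) 0
      = range_prod w (- int j - 1) (-2) * ((w - 1) * w * ((w + 1) * range_prod w 2 (int k + 1)))"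
    by (simp add: w_def add_ac)
  have "((-1::'a) ^ j) * (-1) ^ j = 1" by (simp flip: power_add power_mult_distrib)
  then show ?thesis unfolding whole plus minus by (simp add: w_def algebra_simps)
qed

lemma prod_int_nodes_except:
  assumes "k \<le> N"
  shows "(\<Prod>t\<in>{..N} - {k}. (of_nat k - of_nat t :: 'a::{comm_ring_1, semiring_char_0}))
           = (-1) ^ (N - k) * fact k * fact (N - k)"
proof -
  have "int ` ({..N} - {k}) = {0..int k - 1} \<union> {int k + 1..int N}"
  proof (rule set_eqI, rule iffI)
    fix x assume x: "x \<in> {0..int k - 1} \<union> {int k + 1..int N}"
    then have "0 \<le> x" "x \<le> int N" "x \<noteq> int k" using assms by auto
    then have "x = int (nat x)" "nat x \<in> {..N} - {k}" by auto
    then show "x \<in> int ` ({..N} - {k})" by (metis imageI)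
  qed auto
  moreover have "(\<Prod>t\<in>{..N} - {k}. (of_nat k - of_nat t :: 'a))
        = (\<Prod>t\<in>int ` ({..N} - {k}). of_nat k - of_int t)"
    by (subst prod.reindex) auto
  ultimately have "(\<Prod>t\<in>{..N} - {k}. (of_nat k - of_nat t :: 'a))
        = (\<Prod>t\<in>{0..int k - 1} \<union> {int k + 1..int N}. of_nat k - of_int t)"
    by simp
  also have "\<dots> = (\<Prod>t\<in>{0..int k - 1}. of_nat k - of_int t) * (\<Prod>t\<in>{int k + 1..int N}. of_nat k - of_int t)"
    by (rule prod.union_disjoint) auto
  also have "(\<Prod>t\<in>{0..int k - 1}. (of_nat k - of_int t :: 'a)) = range_prod (0 + of_int (int k)) (1 - int k) 0"
    by (subst prod_diff_range_prod) simp
  also have "\<dots> = fact k" by (subst range_prod_shift) (simp add: fact_range_prod)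
  also have "(\<Prod>t\<in>{int k + 1..int N}. (of_nat k - of_int t :: 'a))
               = range_prod (0 + of_int (int k)) (- int N) (- int k - 1)"
    by (subst prod_diff_range_prod) simp
  also have "\<dots> = range_prod 0 (int k - int N) (-1)" by (subst range_prod_shift) (simp add: algebra_simps)
  also have "\<dots> = (-1) ^ (N - k) * fact (N - k)"
    using assms by (subst range_prod_reflect) (simp add: fact_range_prod nat_diff_distrib of_nat_diff)
  finally show ?thesis by simp
qed

lemma prod_int_nodes: "(\<Prod>t\<in>{..n}. z - of_nat t) = range_prod (z::'a::comm_ring_1) (- int n) 0"
proof -
  have "(\<Prod>t\<in>{..n}. z - of_nat t) = (\<Prod>t\<in>int ` {0..n}. z - of_int t)"
    by (subst prod.reindex) (auto simp: atMost_atLeast0)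
  also have "int ` {0..n} = {0..int n}" by (simp add: image_int_atLeastAtMost)
  finally show ?thesis by (simp add: prod_diff_range_prod)
qed

lemma prod_shifted_nodes:
  fixes z \<beta> :: "'a::comm_ring_1"
  assumes "1 \<le> n"
  shows "(\<Prod>k\<in>{..<n - 1}. z - (of_nat k + 1 - \<beta>)) = range_prod (z + \<beta>) (1 - int n) (-1)"
proof -
  have "(\<Prod>k\<in>{..<n - 1}. z - (of_nat k + 1 - \<beta>)) = (\<Prod>t\<in>int ` {0..<n - 1}. (z + \<beta> - 1) - of_int t)"
    by (subst prod.reindex) (auto simp: lessThan_atLeast0 algebra_simps)
  also have "int ` {0..<n - 1} = {0..int n - 2}" using assms by (auto simp: image_int_atLeastLessThan)
  also have "(\<Prod>t\<in>{0..int n - 2}. (z + \<beta> - 1) - of_int t) = range_prod (z + \<beta> + of_int (-1)) (2 - int n) 0"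
    by (subst prod_diff_range_prod) simp
  also have "\<dots> = range_prod (z + \<beta>) (1 - int n) (-1)" by (subst range_prod_shift) simp
  finally show ?thesis .
qed

definition hyp_coeff :: "nat \<Rightarrow> (nat \<Rightarrow> complex) \<Rightarrow> complex \<Rightarrow> (nat \<Rightarrow> complex) \<Rightarrow> nat \<Rightarrow> complex" where
  "hyp_coeff m f g h k = (\<Prod>i\<in>{1..m}. pochhammer (f i) k) * pochhammer g k /
                          ((\<Prod>l\<in>{1..m}. pochhammer (h l) k) * fact k)"

lemma prod_list_map_upt: "prod_list (map g [1..<m+1]) = (\<Prod>i\<in>{1..m}. g i)"
proof -
  have "prod_list (map g [1..<m+1]) = prod g (set [1..<m+1])"
    by (simp only: prod.distinct_set_conv_list distinct_upt)
  also have "set [1..<m+1] = {1..m}" by auto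
  finally show ?thesis .
qed

lemma fps_nth_hyp_fps:
  "fps_nth (hyp_fps (map f [1..<m+1] @ [g]) (map h [1..<m+1])) k = hyp_coeff m f g h k"
  unfolding hyp_fps_def hyp_coeff_def fps_nth_Abs_fps map_append map_map o_def
  by (simp only: prod_list.append prod_list_map_upt list.map prod_list.Cons prod_list.Nil mult_1_right)

lemma prod_pochhammer_if:
  fixes m r :: nat
  assumes "r \<in> {1..m}"
  shows "(\<Prod>l\<in>{1..m}. pochhammer (if l = r then x else y l) q)
           = pochhammer x q * (\<Prod>l\<in>{1..m} - {r}. pochhammer (y l) q)"
  using assms by (subst prod.remove[of "{1..m}" r]) (auto intro!: prod.cong)

lemma fps_nth_X2_product:
  fixes F G :: "'a::comm_ring_1 fps"
  shows "fps_nth (fps_X ^ 2 * fps_const c * F * G) n = c * (\<Sum>k<n - 1. fps_nth F k * fps_nth G (n - 2 - k))"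
proof -
  have "fps_X ^ 2 * fps_const c * F * G = fps_X ^ 2 * (fps_const c * (F * G))"
    by (simp add: mult.assoc)
  then have "fps_nth (fps_X ^ 2 * fps_const c * F * G) n = (if n < 2 then 0 else c * fps_nth (F * G) (n - 2))"
    by (simp only: fps_X_power_mult_nth fps_mult_left_const_nth)
  moreover have "{..<n - 1} = {0..n - 2}" if "\<not> n < 2" using that by auto
  ultimately show ?thesis by (simp add: fps_mult_nth)
qed

lemma fps_nth_contiguity_combination:
  fixes F G :: "'a::comm_ring_1 fps" and H1 H2 :: "nat \<Rightarrow> 'a fps"
  shows "fps_nth (fps_const P * F * G + (\<Sum>r\<in>R. fps_X ^ 2 * fps_const (c r) * H1 r * H2 r)) n
     = P * (\<Sum>i=0..n. fps_nth F i * fps_nth G (n - i))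
       + (\<Sum>r\<in>R. c r * (\<Sum>k<n - 1. fps_nth (H1 r) k * fps_nth (H2 r) (n - 2 - k)))"
proof -
  have "fps_const P * F * G = fps_const P * (F * G)" by (simp add: mult.assoc)
  then have "fps_nth (fps_const P * F * G) n = P * (\<Sum>i=0..n. fps_nth F i * fps_nth G (n - i))"
    by (simp only: fps_mult_left_const_nth) (simp only: fps_mult_nth)
  then show ?thesis by (simp only: fps_add_nth fps_sum_nth fps_nth_X2_product)
qed

locale contiguity_nodes =
  fixes m n :: nat and a b :: "nat \<Rightarrow> complex"
  assumes n_pos: "1 \<le> n"
    and a_nonzero: "\<And>l. l \<in> {1..m} \<Longrightarrow> a l \<noteq> 0"
    and b_notint: "\<And>r. r \<in> {1..m} \<Longrightarrow> b r \<notin> \<int>"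
    and b_diff_notint: "\<And>l r. l \<in> {1..m} \<Longrightarrow> r \<in> {1..m} \<Longrightarrow> l \<noteq> r \<Longrightarrow> b l - b r \<notin> \<int>"
begin

lemma b_nonzero: "r \<in> {1..m} \<Longrightarrow> b r \<noteq> 0"
  using b_notint by force

(* The interpolation nodes: the integers 0..n and, for each r, the n - 1 points k + 1 - b r.
   The non-integrality hypotheses make all these nodes distinct. *)
definition int_nodes :: "complex set" where
  "int_nodes = of_nat ` {..n}"

definition shifted_nodes :: "nat \<Rightarrow> complex set" where
  "shifted_nodes r = (\<lambda>k. of_nat k + 1 - b r) ` {..<n - 1}"

definition nodes :: "complex set" where
  "nodes = int_nodes \<union> (\<Union>r\<in>{1..m}. shifted_nodes r)"

definition node_denom :: "complex \<Rightarrow> complex" where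
  "node_denom z = (\<Prod>w\<in>nodes - {z}. z - w)"

(* The polynomial whose values at the nodes are the numerators of the summands. *)
definition numerator :: "complex poly" where
  "numerator = (\<Prod>i\<in>{0..m}. \<Prod>t\<in>{1 - int n..-1}. [:a i + of_int t, 1:])"

lemma poly_numerator: "poly numerator z = (\<Prod>i\<in>{0..m}. range_prod (a i + z) (1 - int n) (-1))"
  unfolding numerator_def poly_prod range_prod_def by (intro prod.cong refl) (simp add: algebra_simps)

lemma degree_numerator: "degree numerator \<le> (m + 1) * (n - 1)"
proof -
  have "degree (\<Prod>t\<in>{1 - int n..-1}. [:a i + of_int t, 1:]) \<le> n - 1" for i
    using degree_prod_sum_le[of "{1 - int n..-1}" "\<lambda>t. [:a i + of_int t, 1:]"] n_pos by simp
  then have "degree numerator \<le> (\<Sum>i\<in>{0..m}. n - 1)"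
    unfolding numerator_def
    by (intro order.trans[OF degree_prod_sum_le] sum_mono) auto
  then show ?thesis by simp
qed

lemma finite_nodes: "finite nodes"
  by (simp add: nodes_def int_nodes_def shifted_nodes_def)

lemma int_shifted_nodes_disjoint: "r \<in> {1..m} \<Longrightarrow> int_nodes \<inter> shifted_nodes r = {}"
proof -
  assume r: "r \<in> {1..m}"
  have "(of_nat x::complex) \<noteq> of_nat k + 1 - b r" for x k
  proof
    assume "(of_nat x::complex) = of_nat k + 1 - b r"
    then have "b r = of_int (int k + 1 - int x)" by (simp add: algebra_simps)
    then show False using b_notint[OF r] by (metis Ints_of_int)
  qed
  then show ?thesis unfolding int_nodes_def shifted_nodes_def by blast
qed

lemma shifted_nodes_disjoint:
  "r \<in> {1..m} \<Longrightarrow> r' \<in> {1..m} \<Longrightarrow> r \<noteq> r' \<Longrightarrow> shifted_nodes r \<inter> shifted_nodes r' = {}"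
proof -
  assume rr': "r \<in> {1..m}" "r' \<in> {1..m}" "r \<noteq> r'"
  have "(of_nat x::complex) + 1 - b r \<noteq> of_nat k + 1 - b r'" for x k
  proof
    assume "(of_nat x::complex) + 1 - b r = of_nat k + 1 - b r'"
    then have "b r - b r' = of_int (int x - int k)" by (simp add: algebra_simps)
    then show False using b_diff_notint[OF rr'] by (metis Ints_of_int)
  qed
  then show ?thesis unfolding shifted_nodes_def by blast
qed

lemma inj_shifted_node: "inj_on (\<lambda>k. (of_nat k::complex) + 1 - b r) A"
  by (auto simp: inj_on_def)

lemma sum_nodes:
  "(\<Sum>z\<in>nodes. f z) = (\<Sum>k=0..n. f (of_nat k)) + (\<Sum>r=1..m. \<Sum>k<n - 1. f (of_nat k + 1 - b r))"
proof -
  have "(\<Sum>z\<in>nodes. f z) = (\<Sum>z\<in>int_nodes. f z) + (\<Sum>r\<in>{1..m}. \<Sum>z\<in>shifted_nodes r. f z)"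
    unfolding nodes_def using int_shifted_nodes_disjoint shifted_nodes_disjoint
    by (simp add: sum.union_disjoint sum.UNION_disjoint int_nodes_def shifted_nodes_def
        Int_UN_distrib)
  then show ?thesis
    by (simp add: int_nodes_def shifted_nodes_def sum.reindex inj_shifted_node atMost_atLeast0)
qed

lemma card_nodes: "card nodes = n + 1 + m * (n - 1)"
proof -
  have "card nodes = (\<Sum>z\<in>nodes. 1::nat)" by (rule card_eq_sum)
  also have "\<dots> = (\<Sum>k=0..n. 1) + (\<Sum>r=1..m. \<Sum>k<n - 1. 1)" by (rule sum_nodes)
  finally show ?thesis by simp
qed

lemma lagrange_nodes: "(\<Sum>z\<in>nodes. poly numerator z / node_denom z) = 0"
proof -
  have "(m + 1) * (n - 1) + 2 \<le> n + 1 + m * (n - 1)" using n_pos by (cases n) auto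
  then have "degree numerator + 2 \<le> card nodes" using degree_numerator card_nodes by linarith
  then show ?thesis unfolding node_denom_def by (rule lagrange_sum_vanishes[OF finite_nodes])
qed

lemma node_denom_split:
  "node_denom z = (\<Prod>w\<in>int_nodes - {z}. z - w) * (\<Prod>r\<in>{1..m}. \<Prod>w\<in>shifted_nodes r - {z}. z - w)"
proof -
  have fin: "finite int_nodes" "finite (shifted_nodes r)" for r
    by (simp_all add: int_nodes_def shifted_nodes_def)
  have "int_nodes \<inter> (\<Union>r\<in>{1..m}. shifted_nodes r) = {}"
    using int_shifted_nodes_disjoint by blast
  moreover have "nodes - {z} = (int_nodes - {z}) \<union> (\<Union>r\<in>{1..m}. shifted_nodes r - {z})"
    unfolding nodes_def by blast
  ultimately have "node_denom z = (\<Prod>w\<in>int_nodes - {z}. z - w) * (\<Prod>w\<in>(\<Union>r\<in>{1..m}. shifted_nodes r - {z}). z - w)"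
    unfolding node_denom_def using fin by (subst prod.union_disjoint[symmetric]) auto
  also have "(\<Prod>w\<in>(\<Union>r\<in>{1..m}. shifted_nodes r - {z}). z - w) = (\<Prod>r\<in>{1..m}. \<Prod>w\<in>shifted_nodes r - {z}. z - w)"
    by (rule prod.UNION_disjoint) (use fin shifted_nodes_disjoint in \<open>auto simp: disjoint_iff\<close>)
  finally show ?thesis .
qed

lemma node_denom_int_node:
  assumes "k \<le> n"
  shows "node_denom (of_nat k) = (-1) ^ (n - k) * fact k * fact (n - k) *
                                 (\<Prod>r\<in>{1..m}. range_prod (b r + of_nat k) (1 - int n) (-1))"
proof -
  have k: "(of_nat k::complex) \<in> int_nodes" using assms by (simp add: int_nodes_def)
  have "int_nodes - {of_nat k} = of_nat ` ({..n} - {k})"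
    unfolding int_nodes_def by (auto simp: image_iff)
  then have "(\<Prod>w\<in>int_nodes - {of_nat k}. of_nat k - w) = (\<Prod>t\<in>{..n} - {k}. (of_nat k - of_nat t :: complex))"
    by (simp add: prod.reindex inj_on_def)
  also have "\<dots> = (-1) ^ (n - k) * fact k * fact (n - k)" by (rule prod_int_nodes_except[OF assms])
  finally have int_part: "(\<Prod>w\<in>int_nodes - {of_nat k}. of_nat k - w) = (-1) ^ (n - k) * fact k * fact (n - k)" .
  have "(\<Prod>w\<in>shifted_nodes r - {of_nat k}. of_nat k - w) = range_prod (b r + of_nat k) (1 - int n) (-1)"
    if r: "r \<in> {1..m}" for r
  proof -
    have "shifted_nodes r - {of_nat k} = shifted_nodes r"
      using int_shifted_nodes_disjoint[OF r] k by blast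
    then have "(\<Prod>w\<in>shifted_nodes r - {of_nat k}. of_nat k - w) = (\<Prod>i\<in>{..<n - 1}. of_nat k - (of_nat i + 1 - b r))"
      by (simp add: shifted_nodes_def prod.reindex inj_shifted_node)
    also have "\<dots> = range_prod (of_nat k + b r) (1 - int n) (-1)" by (rule prod_shifted_nodes[OF n_pos])
    finally show ?thesis by (simp add: add.commute)
  qed
  then show ?thesis unfolding node_denom_split int_part by simp
qed

lemma node_denom_shifted_node:
  assumes r: "r \<in> {1..m}" and n: "n = k + j + 2"
  shows "node_denom (of_nat k + 1 - b r)
           = range_prod (- b r + of_nat k + 1) (- (int k + int j + 2)) 0 *
             (\<Prod>l\<in>{1..m} - {r}. range_prod (b l - b r + of_nat k + 1) (- (int k + int j + 1)) (-1)) *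
             ((-1) ^ j * fact k * fact j)"
proof -
  define z where "z = (of_nat k :: complex) + 1 - b r"
  have "k \<in> {..<n - 1}" using n by simp
  then have z: "z \<in> shifted_nodes r" by (simp add: shifted_nodes_def z_def)
  have "z \<notin> int_nodes" using int_shifted_nodes_disjoint[OF r] z by blast
  then have "(\<Prod>w\<in>int_nodes - {z}. z - w) = (\<Prod>t\<in>{..n}. z - of_nat t)"
    by (simp add: int_nodes_def prod.reindex inj_on_def)
  also have "\<dots> = range_prod (- b r + of_nat k + 1) (- (int k + int j + 2)) 0"
    unfolding prod_int_nodes z_def n by (simp add: algebra_simps)
  finally have int_part: "(\<Prod>w\<in>int_nodes - {z}. z - w) = \<dots>" .
  have other_part: "(\<Prod>w\<in>shifted_nodes l - {z}. z - w)
                      = range_prod (b l - b r + of_nat k + 1) (- (int k + int j + 1)) (-1)"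
    if l: "l \<in> {1..m} - {r}" for l
  proof -
    have "z \<notin> shifted_nodes l" using shifted_nodes_disjoint[of r l] r l z by blast
    then have "(\<Prod>w\<in>shifted_nodes l - {z}. z - w) = (\<Prod>i\<in>{..<n - 1}. z - (of_nat i + 1 - b l))"
      by (simp add: shifted_nodes_def prod.reindex inj_shifted_node)
    also have "\<dots> = range_prod (z + b l) (1 - int n) (-1)" by (rule prod_shifted_nodes[OF n_pos])
    finally show ?thesis unfolding z_def n by (simp add: algebra_simps)
  qed
  have "shifted_nodes r - {z} = (\<lambda>i. of_nat i + 1 - b r) ` ({..n - 2} - {k})"
    unfolding shifted_nodes_def z_def using n by (auto simp: image_iff)
  then have "(\<Prod>w\<in>shifted_nodes r - {z}. z - w) = (\<Prod>i\<in>{..n - 2} - {k}. (of_nat k - of_nat i :: complex))"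
    by (simp add: prod.reindex inj_shifted_node z_def)
  also have "\<dots> = (-1) ^ j * fact k * fact j"
    using prod_int_nodes_except[of k "n - 2"] n by simp
  finally have own_part: "(\<Prod>w\<in>shifted_nodes r - {z}. z - w) = (-1) ^ j * fact k * fact j" .
  have "(\<Prod>l\<in>{1..m}. \<Prod>w\<in>shifted_nodes l - {z}. z - w)
          = (\<Prod>w\<in>shifted_nodes r - {z}. z - w) * (\<Prod>l\<in>{1..m} - {r}. \<Prod>w\<in>shifted_nodes l - {z}. z - w)"
    by (rule prod.remove) (use r in auto)
  then show ?thesis
    unfolding z_def[symmetric] node_denom_split int_part own_part using other_part
    by (simp add: mult_ac)
qed

lemma int_node_term:
  assumes "k \<le> n"
  shows "(\<Prod>l=1..m. b l / a l) * (hyp_coeff m a (a 0) b k * hyp_coeff m (\<lambda>i. - a i) (- a 0) (\<lambda>l. - b l) (n - k))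
           = a 0 * (poly numerator (of_nat k) / node_denom (of_nat k))"
proof -
  define s where "s = (-1::complex) ^ (n - k)"
  define R where "R x = range_prod (x + of_nat k) (1 - int n) (-1)" for x :: complex
  have pair: "pochhammer x k * pochhammer (-x) (n - k) = s * x * R x" for x
    using pochhammer_times_pochhammer_neg[OF assms n_pos] by (simp add: s_def R_def)
  have "hyp_coeff m a (a 0) b k * hyp_coeff m (\<lambda>i. - a i) (- a 0) (\<lambda>l. - b l) (n - k)
      = (\<Prod>i\<in>{1..m}. pochhammer (a i) k * pochhammer (- a i) (n - k)) * (pochhammer (a 0) k * pochhammer (- a 0) (n - k))
        / ((\<Prod>l\<in>{1..m}. pochhammer (b l) k * pochhammer (- b l) (n - k)) * (fact k * fact (n - k)))"
    unfolding hyp_coeff_def prod.distrib by (simp add: times_divide_times_eq mult_ac)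
  also have "\<dots> = s ^ m * (\<Prod>i\<in>{1..m}. a i) * (\<Prod>i\<in>{1..m}. R (a i)) * (s * a 0 * R (a 0))
        / (s ^ m * (\<Prod>l\<in>{1..m}. b l) * (\<Prod>l\<in>{1..m}. R (b l)) * (fact k * fact (n - k)))"
    by (simp add: pair prod.distrib)
  finally have coeffs: "hyp_coeff m a (a 0) b k * hyp_coeff m (\<lambda>i. - a i) (- a 0) (\<lambda>l. - b l) (n - k) = \<dots>" .
  have "{0..m} = insert 0 {1..m}" by auto
  then have numer: "poly numerator (of_nat k) = (\<Prod>i\<in>{1..m}. R (a i)) * R (a 0)"
    by (simp add: poly_numerator R_def add.commute mult.commute)
  have denom: "node_denom (of_nat k) = s * (fact k * fact (n - k)) * (\<Prod>l\<in>{1..m}. R (b l))"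
    by (simp add: node_denom_int_node[OF assms] s_def R_def add.commute mult.assoc)
  have "(\<Prod>l\<in>{1..m}. a l) \<noteq> 0" "(\<Prod>l\<in>{1..m}. b l) \<noteq> 0" "(\<Prod>l\<in>{1..m}. R (b l)) \<noteq> 0"
    using a_nonzero b_nonzero b_notint by (auto simp: R_def range_prod_nonzero)
  then show ?thesis
    unfolding coeffs numer denom prod_dividef
    by (simp add: field_simps s_def divide_minus_one_power)
qed

definition contiguous_weight :: "nat \<Rightarrow> complex" where
  "contiguous_weight r = a 0 * (a 0 - b r) * (b r - a r) / (b r * ((b r)^2 - 1)) *
                         (\<Prod>l\<in>{1..m} - {r}. (a l - b r) / (b l - b r))"

lemma cubic_factor_nonzero: "r \<in> {1..m} \<Longrightarrow> (- b r - 1) * (- b r) * (- b r + 1) \<noteq> 0"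
proof -
  assume "r \<in> {1..m}"
  then have "- b r - 1 \<notin> \<int>" "- b r \<notin> \<int>" "- b r + 1 \<notin> \<int>"
    using b_notint by simp_all
  then show ?thesis by (metis Ints_0 mult_eq_0_iff)
qed

lemma prod_b_diff_nonzero: "r \<in> {1..m} \<Longrightarrow> (\<Prod>l\<in>{1..m} - {r}. b l - b r) \<noteq> 0"
  using b_diff_notint by force

(* The weight written with the same factors that appear in the node denominators. *)
lemma contiguous_weight_eq:
  assumes r: "r \<in> {1..m}"
  shows "contiguous_weight r = a 0 * (a 0 - b r) * (\<Prod>i\<in>{1..m}. a i - b r) /
           ((- b r - 1) * (- b r) * (- b r + 1) * (\<Prod>l\<in>{1..m} - {r}. b l - b r))"
proof -
  have cubic: "(- b r - 1) * (- b r) * (- b r + 1) = - (b r * ((b r)^2 - 1))"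
    by (simp add: algebra_simps power2_eq_square)
  have prod_split: "(\<Prod>i\<in>{1..m}. a i - b r) = (a r - b r) * (\<Prod>i\<in>{1..m} - {r}. a i - b r)"
    by (rule prod.remove) (use r in auto)
  show ?thesis
    using cubic_factor_nonzero[OF r] prod_b_diff_nonzero[OF r]
    unfolding contiguous_weight_def prod_dividef cubic prod_split by (simp add: field_simps)
qed

lemma shifted_node_term:
  assumes r: "r \<in> {1..m}" and k: "k < n - 1"
  shows "contiguous_weight r *
           (hyp_coeff m (\<lambda>i. 1 + (a i - b r)) (1 + (a 0 - b r)) (\<lambda>l. if l = r then 2 - b r else 1 + (b l - b r)) k *
            hyp_coeff m (\<lambda>i. 1 - (a i - b r)) (1 - (a 0 - b r)) (\<lambda>l. if l = r then 2 + b r else 1 - (b l - b r)) (n - 2 - k))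
         = a 0 * (poly numerator (of_nat k + 1 - b r) / node_denom (of_nat k + 1 - b r))"
proof -
  define j where "j = n - 2 - k"
  have n: "n = k + j + 2" using k by (simp add: j_def)
  define sj where "sj = (-1::complex) ^ j"
  define P where "P u = pochhammer (1 + u) k * pochhammer (1 - u) j" for u :: complex
  define Pw where "Pw = pochhammer (2 - b r) k * pochhammer (2 + b r) j"
  define W where "W = (- b r - 1) * (- b r) * (- b r + 1)"
  have U_P: "range_prod (u + of_nat k + 1) (- (int k + int j + 1)) (-1) = P u * u * sj" for u
    using pochhammer_one_plus_one_minus[of u k j] by (simp add: P_def sj_def mult_ac)
  have zero_m: "{0..m} = insert 0 {1..m}" by auto
  have "poly numerator (of_nat k + 1 - b r)
          = (\<Prod>i\<in>{0..m}. range_prod ((a i - b r) + of_nat k + 1) (- (int k + int j + 1)) (-1))"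
    unfolding poly_numerator by (intro prod.cong refl) (simp add: n algebra_simps)
  also have "\<dots> = (\<Prod>i\<in>insert 0 {1..m}. P (a i - b r) * (a i - b r) * sj)"
    by (simp only: U_P zero_m)
  also have "\<dots> = (\<Prod>i\<in>{1..m}. P (a i - b r)) * (\<Prod>i\<in>{1..m}. a i - b r) * (sj * sj ^ (m - 1))
                    * (P (a 0 - b r) * (a 0 - b r) * sj)"
    using r by (cases m) (simp_all add: prod.distrib mult.commute)
  finally have numer: "poly numerator (of_nat k + 1 - b r) = \<dots>" .
  have w_part: "range_prod (- b r + of_nat k + 1) (- (int k + int j + 2)) 0 = Pw * sj * W"
    using pochhammer_two_minus_two_plus[of "b r" k j] by (simp add: Pw_def sj_def W_def mult_ac)
  have "card ({1..m} - {r}) = m - 1" using r by auto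
  then have denom: "node_denom (of_nat k + 1 - b r)
      = Pw * sj * W * ((\<Prod>l\<in>{1..m} - {r}. P (b l - b r)) * (\<Prod>l\<in>{1..m} - {r}. b l - b r) * sj ^ (m - 1))
        * (sj * fact k * fact j)"
    unfolding node_denom_shifted_node[OF r n] U_P w_part prod.distrib prod_constant
    by (simp add: sj_def)
  have coeffs: "hyp_coeff m (\<lambda>i. 1 + (a i - b r)) (1 + (a 0 - b r)) (\<lambda>l. if l = r then 2 - b r else 1 + (b l - b r)) k *
        hyp_coeff m (\<lambda>i. 1 - (a i - b r)) (1 - (a 0 - b r)) (\<lambda>l. if l = r then 2 + b r else 1 - (b l - b r)) j
      = (\<Prod>i\<in>{1..m}. P (a i - b r)) * P (a 0 - b r) / (Pw * (\<Prod>l\<in>{1..m} - {r}. P (b l - b r)) * (fact k * fact j))"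
    unfolding hyp_coeff_def prod_pochhammer_if[OF r] P_def Pw_def prod.distrib
    by (simp add: times_divide_times_eq mult_ac)
  have "2 - b r \<notin> \<int>" "2 + b r \<notin> \<int>" using b_notint[OF r] by simp_all
  then have "Pw \<noteq> 0" unfolding Pw_def by (simp add: pochhammer_nonzero)
  moreover have "(\<Prod>l\<in>{1..m} - {r}. P (b l - b r)) \<noteq> 0"
    using b_diff_notint r by (force simp: P_def pochhammer_nonzero)
  ultimately show ?thesis
    using cubic_factor_nonzero[OF r] prod_b_diff_nonzero[OF r]
    unfolding j_def[symmetric] contiguous_weight_eq[OF r] W_def[symmetric] coeffs numer denom
    by (simp add: field_simps sj_def)
qed

lemma coefficient_identity:
  "(\<Prod>l=1..m. b l / a l) *
     (\<Sum>i=0..n. hyp_coeff m a (a 0) b i * hyp_coeff m (\<lambda>i. - a i) (- a 0) (\<lambda>l. - b l) (n - i))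
   + (\<Sum>r=1..m. contiguous_weight r *
       (\<Sum>k<n - 1.
          hyp_coeff m (\<lambda>i. 1 + (a i - b r)) (1 + (a 0 - b r)) (\<lambda>l. if l = r then 2 - b r else 1 + (b l - b r)) k *
          hyp_coeff m (\<lambda>i. 1 - (a i - b r)) (1 - (a 0 - b r)) (\<lambda>l. if l = r then 2 + b r else 1 - (b l - b r)) (n - 2 - k)))
   = 0"
proof -
  have "(\<Prod>l=1..m. b l / a l) *
     (\<Sum>i=0..n. hyp_coeff m a (a 0) b i * hyp_coeff m (\<lambda>i. - a i) (- a 0) (\<lambda>l. - b l) (n - i))
   + (\<Sum>r=1..m. contiguous_weight r *
       (\<Sum>k<n - 1.
          hyp_coeff m (\<lambda>i. 1 + (a i - b r)) (1 + (a 0 - b r)) (\<lambda>l. if l = r then 2 - b r else 1 + (b l - b r)) k *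
          hyp_coeff m (\<lambda>i. 1 - (a i - b r)) (1 - (a 0 - b r)) (\<lambda>l. if l = r then 2 + b r else 1 - (b l - b r)) (n - 2 - k)))
   = a 0 * (\<Sum>z\<in>nodes. poly numerator z / node_denom z)"
    unfolding sum_nodes sum_distrib_left distrib_left
    by (intro arg_cong2[where f = "(+)"] sum.cong refl int_node_term shifted_node_term) auto
  then show ?thesis by (simp add: lagrange_nodes)
qed

end

(* The statement: compare coefficients; n = 0 is immediate and n >= 1 is
   coefficient_identity. *)
theorem corollary5p2:
  fixes m :: nat and a b :: "nat \<Rightarrow> complex"
  assumes "m \<ge> 1"
    and ab: "\<And>i j. i \<le> m \<Longrightarrow> 1 \<le> j \<Longrightarrow> j \<le> m \<Longrightarrow> a i - b j \<notin> \<int>"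
    and a0: "\<And>i. i \<le> m \<Longrightarrow> a i - 0 \<notin> \<int>"
    and b0: "\<And>j. 1 \<le> j \<Longrightarrow> j \<le> m \<Longrightarrow> 0 - b j \<notin> \<int>"
    and bb: "\<And>i j. 1 \<le> i \<Longrightarrow> i < j \<Longrightarrow> j \<le> m \<Longrightarrow> b i - b j \<notin> \<int>"
  shows
    "let as = map a [1..<m+1] @ [a 0];
         bs = map b [1..<m+1];
         P = (\<Prod>l=1..m. b l / a l)
     in fps_const P =
        fps_const P * hyp_fps as bs * hyp_fps (map uminus as) (map uminus bs)
        + (\<Sum>r=1..m. fps_X ^ 2 *
             fps_const (a 0 * (a 0 - b r) * (b r - a r) / (b r * ((b r)^2 - 1)) *
                        (\<Prod>l\<in>{1..m} - {r}. (a l - b r) / (b l - b r))) *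
             hyp_fps (map (\<lambda>c. 1 + (c - b r)) as)
                     (map (\<lambda>l. if l = r then 2 - b r else 1 + (b l - b r)) [1..<m+1]) *
             hyp_fps (map (\<lambda>c. 1 - (c - b r)) as)
                     (map (\<lambda>l. if l = r then 2 + b r else 1 - (b l - b r)) [1..<m+1]))"
proof -
  have setting: "contiguity_nodes m n a b" if "1 \<le> n" for n
  proof
    show "b l - b r \<notin> \<int>" if "l \<in> {1..m}" "r \<in> {1..m}" "l \<noteq> r" for l r
    proof (cases "l < r")
      case True
      then show ?thesis using bb[of l r] that by auto
    next
      case False
      then have "b r - b l \<notin> \<int>" using bb[of r l] that by auto
      then show ?thesis by (metis minus_diff_eq minus_in_Ints_iff)
    qed
  qed (use that a0 b0 in force)+
  show ?thesis
    unfolding Let_def fps_eq_iff fps_nth_contiguity_combination map_append map_map o_def list.map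
      fps_nth_hyp_fps
  proof (intro allI, goal_cases)
    case (1 n)
    show ?case
    proof (cases "n = 0")
      case True
      then show ?thesis by (simp add: hyp_coeff_def)
    next
      case False
      then have "contiguity_nodes m n a b" by (intro setting) simp
      then show ?thesis
        using contiguity_nodes.coefficient_identity False by (simp add: contiguity_nodes.contiguous_weight_def)
    qed
  qed
qed

end
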